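(* Let $G=(\mathbb V,\mathbb E,w)$ be a connected undirected graph with $n\ge2$ vertices and nonnegative weights, $\epsilon\in(0,2)$, $\delta\in(0,1/e]$, $\gamma\in(0,1)$, and run Algorithm A (see context), producing $\mathbb V_1$, $\mathbb E_0$, $\mathbb E_1$ and $w'$. For each pair $u,v\in\mathbb V$ fix (depending only on $G$ and $w$) a shortest path $P_{u,v}$ in $G$, and let $P^{\mathbb V_1}_{u,v}$ be the corresponding canonical shortest path. Then there is a universal constant $C>0$ such that, with probability at least $1-4\gamma$, for all $u,v\in\mathbb V$, $$\Big|\sum_{e\in P^{\mathbb V_1}_{u,v}}\big(w'(e)-\bar w(e)\big)\Big|\le C\,n^{1/2}\sqrt{\log(1/\delta)}\,\log^2(n/\gamma)/\epsilon .$$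
   Context: $Lap(\mu,\sigma)$: Laplace distribution with location $\mu$, scale $\sigma$, density $\frac{1}{2\sigma}e^{-|x-\mu|/\sigma}$. $d_G(u,v)$: shortest-path distance in $G$. Algorithm A (input $G=(\mathbb V,\mathbb E,w)$, $n=|\mathbb V|$ with $n^{1/2}$ an integer, parameters $\epsilon,\delta,\gamma$): set $\epsilon'=\epsilon/2$; choose $\mathbb V_1\subseteq\mathbb V$ uniformly at random among subsets of size $n^{1/2}$; let $\mathbb E_1=\{\{u,v\}:u,v\in\mathbb V_1,u\neq v\}$ and $\mathbb E_0=\mathbb E\setminus\mathbb E_1$; for $e=\{u,v\}\in\mathbb E_1$ set $w'(e)=d_G(u,v)+X_e$, $X_e\sim Lap(\mu_1,\sigma_1)$ with $\sigma_1=2\sqrt2\,n^{1/2}\sqrt{\log(1/\delta)}/\epsilon'$, $\mu_1=\sigma_1\log(n/\gamma)$; for $e\in\mathbb E_0$ set $w'(e)=w(e)+X_e$, $X_e\sim Lap(\mu_0,\sigma_0)$ with $\sigma_0=1/\epsilon'$, $\mu_0=\sigma_0\log(n^2/\gamma)$; all noises independent; output $G'=(\mathbb V,\mathbb E_0\cup\mathbb E_1,w')$. Define $\bar w(e)=w(e)$ for $e\in\mathbb E_0$ and $\bar w(\{u,v\})=d_G(u,v)$ for $\{u,v\}\in\mathbb E_1$ (so $w'(e)-\bar w(e)=X_e$). Canonical shortest path: given the fixed shortest path $P_{u,v}=(u=x_0,x_1,\dots,x_L=v)$ in $G$, if $P_{u,v}$ contains at most one vertex of $\mathbb V_1$ then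 $P^{\mathbb V_1}_{u,v}=P_{u,v}$; otherwise let $p$ be the first and $q$ the last vertex of $P_{u,v}$ (traversed from $u$ to $v$) lying in $\mathbb V_1$, and let $P^{\mathbb V_1}_{u,v}$ be the path in $G'$ consisting of the subpath of $P_{u,v}$ from $u$ to $p$, the edge $\{p,q\}\in\mathbb E_1$, and the subpath of $P_{u,v}$ from $q$ to $v$. Edges of $P_{u,v}$ with both endpoints in $\mathbb V_1$ are regarded as the corresponding $\mathbb E_1$ edges. *)

theory Defs
  imports "HOL-Probability.Probability"
begin

definition simple_graph :: "'a set \<Rightarrow> 'a set set \<Rightarrow> bool" where
  "simple_graph V E \<longleftrightarrow> finite V \<and> (\<forall>e\<in>E. e \<subseteq> V \<and> card e = 2)"

definition path_edges :: "'a list \<Rightarrow> 'a set list" where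
  "path_edges xs = map (\<lambda>(a, b). {a, b}) (zip xs (tl xs))"

definition is_path :: "'a set \<Rightarrow> 'a set set \<Rightarrow> 'a list \<Rightarrow> 'a \<Rightarrow> 'a \<Rightarrow> bool" where
  "is_path V E xs u v \<longleftrightarrow> xs \<noteq> [] \<and> hd xs = u \<and> last xs = v \<and> distinct xs
     \<and> set xs \<subseteq> V \<and> (\<forall>e\<in>set (path_edges xs). e \<in> E)"

definition path_weight :: "('a set \<Rightarrow> real) \<Rightarrow> 'a list \<Rightarrow> real" where
  "path_weight w xs = sum_list (map w (path_edges xs))"

definition connected_graph :: "'a set \<Rightarrow> 'a set set \<Rightarrow> bool" where
  "connected_graph V E \<longleftrightarrow> (\<forall>u\<in>V. \<forall>v\<in>V. \<exists>xs. is_path V E xs u v)"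

definition dist_G :: "'a set \<Rightarrow> 'a set set \<Rightarrow> ('a set \<Rightarrow> real) \<Rightarrow> 'a \<Rightarrow> 'a \<Rightarrow> real" where
  "dist_G V E w u v = Inf {path_weight w xs | xs. is_path V E xs u v}"

definition is_shortest_path ::
  "'a set \<Rightarrow> 'a set set \<Rightarrow> ('a set \<Rightarrow> real) \<Rightarrow> 'a list \<Rightarrow> 'a \<Rightarrow> 'a \<Rightarrow> bool" where
  "is_shortest_path V E w xs u v \<longleftrightarrow>
     is_path V E xs u v \<and> path_weight w xs = dist_G V E w u v"

text \<open>n^(1/2) (an integer by assumption).\<close>
definition isqrt :: "nat \<Rightarrow> nat" where
  "isqrt n = nat \<lfloor>sqrt (real n)\<rfloor>"

definition E1_of :: "'a set \<Rightarrow> 'a set set" where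
  "E1_of V1 = {{u, v} | u v. u \<in> V1 \<and> v \<in> V1 \<and> u \<noteq> v}"

definition E0_of :: "'a set set \<Rightarrow> 'a set \<Rightarrow> 'a set set" where
  "E0_of E V1 = E - E1_of V1"

definition laplace_density :: "real \<Rightarrow> real \<Rightarrow> real \<Rightarrow> real" where
  "laplace_density \<mu> \<sigma> x = exp (- \<bar>x - \<mu>\<bar> / \<sigma>) / (2 * \<sigma>)"

definition Lap :: "real \<Rightarrow> real \<Rightarrow> real measure" where
  "Lap \<mu> \<sigma> = density lborel (\<lambda>x. ennreal (laplace_density \<mu> \<sigma> x))"

definition sigma1 :: "nat \<Rightarrow> real \<Rightarrow> real \<Rightarrow> real" where
  "sigma1 n \<epsilon> \<delta> = 2 * sqrt 2 * sqrt (real n) * sqrt (ln (1 / \<delta>)) / (\<epsilon> / 2)"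

definition mu1 :: "nat \<Rightarrow> real \<Rightarrow> real \<Rightarrow> real \<Rightarrow> real" where
  "mu1 n \<epsilon> \<delta> \<gamma> = sigma1 n \<epsilon> \<delta> * ln (real n / \<gamma>)"

definition sigma0 :: "real \<Rightarrow> real" where
  "sigma0 \<epsilon> = 1 / (\<epsilon> / 2)"

definition mu0 :: "nat \<Rightarrow> real \<Rightarrow> real \<Rightarrow> real" where
  "mu0 n \<epsilon> \<gamma> = sigma0 \<epsilon> * ln (real n ^ 2 / \<gamma>)"

definition noise_measure ::
  "'a set \<Rightarrow> 'a set set \<Rightarrow> real \<Rightarrow> real \<Rightarrow> real \<Rightarrow> 'a set \<Rightarrow> ('a set \<Rightarrow> real) measure" where
  "noise_measure V E \<epsilon> \<delta> \<gamma> V1 =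
     (\<Pi>\<^sub>M e\<in>E0_of E V1 \<union> E1_of V1.
        if e \<in> E1_of V1 then Lap (mu1 (card V) \<epsilon> \<delta> \<gamma>) (sigma1 (card V) \<epsilon> \<delta>)
        else Lap (mu0 (card V) \<epsilon> \<gamma>) (sigma0 \<epsilon>))"

definition edge_dist :: "'a set \<Rightarrow> 'a set set \<Rightarrow> ('a set \<Rightarrow> real) \<Rightarrow> 'a set \<Rightarrow> real" where
  "edge_dist V E w e = (THE d. \<exists>u v. e = {u, v} \<and> d = dist_G V E w u v)"

definition w_out ::
  "'a set \<Rightarrow> 'a set set \<Rightarrow> ('a set \<Rightarrow> real) \<Rightarrow> 'a set \<Rightarrow> ('a set \<Rightarrow> real) \<Rightarrow> 'a set \<Rightarrow> real" where
  "w_out V E w V1 X e =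
     (if e \<in> E1_of V1 then edge_dist V E w e + X e else w e + X e)"

definition w_bar :: "'a set \<Rightarrow> 'a set set \<Rightarrow> ('a set \<Rightarrow> real) \<Rightarrow> 'a set \<Rightarrow> 'a set \<Rightarrow> real" where
  "w_bar V E w V1 e = (if e \<in> E1_of V1 then edge_dist V E w e else w e)"

text \<open>Given a vertex sequence P = (x0..xL): if at most one vertex lies in V1, keep P;
  otherwise, with p = x_i the first and q = x_j the last vertex in V1, return
  (x0..x_i, x_j..xL), i.e. the subpath to p, the edge {p,q}, the subpath from q.\<close>
definition canonical_path :: "'a set \<Rightarrow> 'a list \<Rightarrow> 'a list" where
  "canonical_path V1 P =
     (let I = filter (\<lambda>i. P ! i \<in> V1) [0..<length P]
      in if length I \<le> 1 then P else take (hd I + 1) P @ drop (last I) P)"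

end

theory Submission
  imports Defs "HOL-Real_Asymp.Real_Asymp"
begin

text \<open>Condition on the sampled set \<open>V1\<close> of \<open>k = \<surd>n\<close> vertices. A variable \<open>Lap(\<mu>, \<sigma>)\<close> lies in
  \<open>[0, 2\<mu>]\<close> except with probability \<open>exp(-\<mu>/\<sigma>)\<close>; with the locations \<open>\<mu>\<^sub>0, \<mu>\<^sub>1\<close> of Algorithm A and a
  union bound over the at most \<open>n\<^sup>2 + n\<close> noisy edges, all noises lie in these ranges with
  probability at least \<open>1 - 2\<gamma>\<close>. On that event the noise along a canonical path is a sum of
  nonnegative terms: at most one \<open>E\<^sub>1\<close> edge (the shortcut \<open>{p, q}\<close>), all others being \<open>E\<^sub>0\<close> edges
  before the first or after the last vertex of \<open>V1\<close>. If \<open>V1\<close> meets every block of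
  \<open>m \<approx> k log(n\<^sup>3/\<gamma>)\<close> consecutive vertices of every path, both segments have fewer than \<open>m\<close>
  edges, so the sum is at most \<open>4m\<mu>\<^sub>0 + 2\<mu>\<^sub>1 = O(\<surd>n \<surd>log(1/\<delta>) log\<^sup>2(n/\<gamma>)/\<epsilon>)\<close>. A uniformly random
  \<open>k\<close>-subset misses a given block with probability at most \<open>(1 - k/n)\<^sup>m \<le> \<gamma>/n\<^sup>3\<close>, and there are at
  most \<open>n\<^sup>3\<close> pairs of a path and a block, so the hitting property fails for at most a \<open>\<gamma>\<close>-fraction
  of the sets \<open>V1\<close>. Averaging over \<open>V1\<close> gives the bound \<open>1 - 3\<gamma>\<close>.\<close>

section \<open>Laplace noise\<close>

lemma laplace_density_borel [measurable]: "laplace_density \<mu> \<sigma> \<in> borel_measurable borel"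
  unfolding laplace_density_def by measurable

lemma space_Lap [simp]: "space (Lap \<mu> \<sigma>) = UNIV"
  unfolding Lap_def by simp

lemma sets_Lap [simp, measurable_cong]: "sets (Lap \<mu> \<sigma>) = sets borel"
  unfolding Lap_def by simp

lemma emeasure_Lap_singleton: "emeasure (Lap \<mu> \<sigma>) {x} = 0"
  unfolding Lap_def by (subst emeasure_density) auto

lemma emeasure_Lap_atLeast:
  assumes "\<sigma> > 0" and "\<mu> \<le> a"
  shows "emeasure (Lap \<mu> \<sigma>) {a..} = ennreal (exp (- (a - \<mu>) / \<sigma>) / 2)"
proof -
  let ?F = "\<lambda>x. - exp (- (x - \<mu>) / \<sigma>) / 2"
  have "emeasure (Lap \<mu> \<sigma>) {a..} = (\<integral>\<^sup>+x. ennreal (laplace_density \<mu> \<sigma> x) * indicator {a..} x \<partial>lborel)"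
    unfolding Lap_def by (subst emeasure_density) auto
  also have "\<dots> = ennreal (0 - ?F a)"
  proof (rule nn_integral_FTC_atLeast)
    fix x assume "a \<le> x"
    then have "laplace_density \<mu> \<sigma> x = exp (- (x - \<mu>) / \<sigma>) / (2 * \<sigma>)"
      using assms by (simp add: laplace_density_def)
    then show "(?F has_real_derivative laplace_density \<mu> \<sigma> x) (at x)"
      using assms by (auto intro!: derivative_eq_intros simp: field_simps)
    show "0 \<le> laplace_density \<mu> \<sigma> x"
      using assms by (simp add: laplace_density_def)
  next
    show "(?F \<longlongrightarrow> 0) at_top"
      using assms by real_asymp
  qed auto
  finally show ?thesis by simp
qed

lemma emeasure_Lap_atMost:
  assumes "\<sigma> > 0" and "b \<le> \<mu>"
  shows "emeasure (Lap \<mu> \<sigma>) {..b} = ennreal (exp (- (\<mu> - b) / \<sigma>) / 2)"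
proof -
  have "emeasure (Lap \<mu> \<sigma>) {..b} = (\<integral>\<^sup>+x. ennreal (laplace_density \<mu> \<sigma> x) * indicator {..b} x \<partial>lborel)"
    unfolding Lap_def by (subst emeasure_density) auto
  also have "\<dots> = (\<integral>\<^sup>+x. ennreal (laplace_density (- \<mu>) \<sigma> x) * indicator {- b..} x \<partial>lborel)"
    by (subst nn_integral_real_affine[where c = "-1" and t = 0])
      (auto intro!: nn_integral_cong simp: laplace_density_def indicator_def abs_minus_commute add.commute)
  also have "\<dots> = emeasure (Lap (- \<mu>) \<sigma>) {- b..}"
    unfolding Lap_def by (subst emeasure_density) auto
  also have "\<dots> = ennreal (exp (- (\<mu> - b) / \<sigma>) / 2)"
    using emeasure_Lap_atLeast[OF assms(1), of "- \<mu>" "- b"] assms(2) by simp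
  finally show ?thesis .
qed

lemma prob_space_Lap:
  assumes "\<sigma> > 0"
  shows "prob_space (Lap \<mu> \<sigma>)"
proof
  have "emeasure (Lap \<mu> \<sigma>) {\<mu><..} = emeasure (Lap \<mu> \<sigma>) ({\<mu>} \<union> {\<mu><..})"
    using plus_emeasure[of "{\<mu>}" "Lap \<mu> \<sigma>" "{\<mu><..}"] by (simp add: emeasure_Lap_singleton)
  also have "{\<mu>} \<union> {\<mu><..} = {\<mu>..}"
    by auto
  finally have upper: "emeasure (Lap \<mu> \<sigma>) {\<mu><..} = ennreal (1 / 2)"
    using emeasure_Lap_atLeast[OF assms order_refl] by simp
  have "space (Lap \<mu> \<sigma>) = {..\<mu>} \<union> {\<mu><..}"
    by auto
  then have "emeasure (Lap \<mu> \<sigma>) (space (Lap \<mu> \<sigma>)) = emeasure (Lap \<mu> \<sigma>) ({..\<mu>} \<union> {\<mu><..})"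
    by simp
  also have "\<dots> = emeasure (Lap \<mu> \<sigma>) {..\<mu>} + emeasure (Lap \<mu> \<sigma>) {\<mu><..}"
    by (rule plus_emeasure[symmetric]) auto
  also have "\<dots> = ennreal (1 / 2) + ennreal (1 / 2)"
    using emeasure_Lap_atMost[OF assms order_refl] upper by simp
  finally show "emeasure (Lap \<mu> \<sigma>) (space (Lap \<mu> \<sigma>)) = 1"
    by (simp del: space_Lap ennreal_half flip: ennreal_plus)
qed

lemma measure_Lap_outside:
  assumes "\<sigma> > 0" and "\<mu> \<ge> 0"
  shows "measure (Lap \<mu> \<sigma>) (- {0..2 * \<mu>}) \<le> exp (- \<mu> / \<sigma>)"
proof -
  interpret prob_space "Lap \<mu> \<sigma>"
    using assms(1) by (rule prob_space_Lap)
  have "measure (Lap \<mu> \<sigma>) (- {0..2 * \<mu>}) \<le> measure (Lap \<mu> \<sigma>) ({..0} \<union> {2 * \<mu>..})"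
    by (rule finite_measure_mono) auto
  also have "\<dots> \<le> measure (Lap \<mu> \<sigma>) {..0} + measure (Lap \<mu> \<sigma>) {2 * \<mu>..}"
    by (rule measure_Un_le) auto
  also have "\<dots> = exp (- \<mu> / \<sigma>)"
    using emeasure_Lap_atMost[OF assms(1), of 0 \<mu>] emeasure_Lap_atLeast[OF assms(1), of \<mu> "2 * \<mu>"] assms(2)
    by (simp add: measure_def)
  finally show ?thesis .
qed

lemma prob_PiM_Lap_within:
  assumes "finite I" and "\<And>e. e \<in> I \<Longrightarrow> \<sigma> e > 0" and "\<And>e. e \<in> I \<Longrightarrow> \<mu> e \<ge> 0"
  defines "M \<equiv> \<Pi>\<^sub>M e\<in>I. Lap (\<mu> e) (\<sigma> e)"
  shows "1 - (\<Sum>e\<in>I. exp (- \<mu> e / \<sigma> e)) \<le> measure M {X \<in> space M. \<forall>e\<in>I. X e \<in> {0..2 * \<mu> e}}"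
proof -
  have Lap: "prob_space (Lap (\<mu> e) (\<sigma> e))" if "e \<in> I" for e
    using assms(2)[OF that] by (rule prob_space_Lap)
  interpret M: prob_space M
    unfolding M_def using Lap by (rule prob_space_PiM)
  have outside: "measure M {X \<in> space M. X e \<in> - {0..2 * \<mu> e}} \<le> exp (- \<mu> e / \<sigma> e)" if e: "e \<in> I" for e
  proof -
    have "measure M {X \<in> space M. X e \<in> - {0..2 * \<mu> e}} = measure (distr M (Lap (\<mu> e) (\<sigma> e)) (\<lambda>X. X e)) (- {0..2 * \<mu> e})"
      unfolding M_def by (subst measure_distr) (auto intro!: measurable_component_singleton e simp: vimage_def Int_def conj_commute)
    also have "\<dots> = measure (Lap (\<mu> e) (\<sigma> e)) (- {0..2 * \<mu> e})"
      unfolding M_def using distr_PiM_component[of I "\<lambda>e. Lap (\<mu> e) (\<sigma> e)" e] Lap e by simp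
    also have "\<dots> \<le> exp (- \<mu> e / \<sigma> e)"
      using assms(2,3)[OF e] by (rule measure_Lap_outside)
    finally show ?thesis .
  qed
  define Out where "Out = (\<Union>e\<in>I. {X \<in> space M. X e \<in> - {0..2 * \<mu> e}})"
  have component_sets: "{X \<in> space M. X e \<in> - {0..2 * \<mu> e}} \<in> sets M" if "e \<in> I" for e
    unfolding M_def using that by measurable
  then have Out_sets: "Out \<in> sets M"
    unfolding Out_def using assms(1) by blast
  have "measure M Out \<le> (\<Sum>e\<in>I. measure M {X \<in> space M. X e \<in> - {0..2 * \<mu> e}})"
    unfolding Out_def using component_sets by (intro M.finite_measure_subadditive_finite assms(1)) auto
  also have "\<dots> \<le> (\<Sum>e\<in>I. exp (- \<mu> e / \<sigma> e))"
    using outside by (rule sum_mono)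
  finally have "1 - (\<Sum>e\<in>I. exp (- \<mu> e / \<sigma> e)) \<le> measure M (space M - Out)"
    using M.prob_compl[OF Out_sets] by simp
  also have "space M - Out = {X \<in> space M. \<forall>e\<in>I. X e \<in> {0..2 * \<mu> e}}"
    unfolding Out_def by auto
  finally show ?thesis .
qed

section \<open>Paths and canonical paths\<close>

lemma path_edges_Nil [simp]: "path_edges [] = []"
  unfolding path_edges_def by simp

lemma path_edges_singleton [simp]: "path_edges [x] = []"
  unfolding path_edges_def by simp

lemma path_edges_Cons_Cons [simp]: "path_edges (x # y # zs) = {x, y} # path_edges (y # zs)"
  unfolding path_edges_def by simp

lemma length_path_edges [simp]: "length (path_edges xs) = length xs - 1"
  unfolding path_edges_def by simp

lemma nth_path_edges: "t < length xs - 1 \<Longrightarrow> path_edges xs ! t = {xs ! t, xs ! Suc t}"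
  unfolding path_edges_def by (simp add: nth_tl)

lemma path_edges_append:
  "xs \<noteq> [] \<Longrightarrow> ys \<noteq> [] \<Longrightarrow> path_edges (xs @ ys) = path_edges xs @ {last xs, hd ys} # path_edges ys"
proof (induction xs rule: induct_list012)
  case (3 x y zs)
  then show ?case by simp
qed (auto simp: neq_Nil_conv)

lemma path_edges_take: "path_edges (take (Suc k) xs) = take k (path_edges xs)"
proof (induction xs arbitrary: k rule: induct_list012)
  case (3 x y zs)
  then show ?case by (cases k) auto
qed simp_all

lemma path_edges_drop: "path_edges (drop k xs) = drop k (path_edges xs)"
  unfolding path_edges_def by (simp add: drop_map drop_zip tl_drop)

lemma sum_list_map_bounded:
  fixes X :: "'a \<Rightarrow> real" and a :: real
  assumes "\<And>e. e \<in> set es \<Longrightarrow> 0 \<le> X e \<and> X e \<le> a"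
  shows "0 \<le> sum_list (map X es) \<and> sum_list (map X es) \<le> real (length es) * a"
  using assms
proof (induction es)
  case (Cons e es)
  have "0 \<le> X e \<and> X e \<le> a"
    using Cons.prems by simp
  moreover have "0 \<le> sum_list (map X es) \<and> sum_list (map X es) \<le> real (length es) * a"
    using Cons by simp
  ultimately show ?case
    by (simp add: algebra_simps)
qed simp

lemma subset_of_mem_E1_of: "e \<in> E1_of V1 \<Longrightarrow> e \<subseteq> V1"
  unfolding E1_of_def by blast

lemma doubleton_mem_E1_of: "p \<in> V1 \<Longrightarrow> q \<in> V1 \<Longrightarrow> p \<noteq> q \<Longrightarrow> {p, q} \<in> E1_of V1"
  unfolding E1_of_def by blast

lemma E1_of_subset_image: "E1_of V1 \<subseteq> (\<lambda>(u, v). {u, v}) ` (V1 \<times> V1)"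
  unfolding E1_of_def by auto

lemma finite_E1_of: "finite V1 \<Longrightarrow> finite (E1_of V1)"
  using E1_of_subset_image by (rule finite_subset) simp

lemma card_E1_of_le:
  assumes "finite V1"
  shows "card (E1_of V1) \<le> card V1 ^ 2"
proof -
  have "card (E1_of V1) \<le> card ((\<lambda>(u, v). {u, v}) ` (V1 \<times> V1))"
    using assms by (intro card_mono E1_of_subset_image) simp
  also have "\<dots> \<le> card (V1 \<times> V1)"
    by (rule card_image_le) (simp add: assms)
  finally show ?thesis
    by (simp add: card_cartesian_product power2_eq_square)
qed

lemma path_edges_disjoint_E1_of:
  assumes "\<And>t. t < length ys - 1 \<Longrightarrow> ys ! t \<notin> V1 \<or> ys ! Suc t \<notin> V1"
  shows "set (path_edges ys) \<inter> E1_of V1 = {}"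
proof -
  have "e \<notin> E1_of V1" if "e \<in> set (path_edges ys)" for e
  proof -
    obtain t where t: "t < length ys - 1" and e: "e = {ys ! t, ys ! Suc t}"
      using \<open>e \<in> set (path_edges ys)\<close> by (auto simp: in_set_conv_nth nth_path_edges)
    then have "\<not> e \<subseteq> V1"
      using assms[OF t] by blast
    then show ?thesis
      using subset_of_mem_E1_of by blast
  qed
  then show ?thesis
    by blast
qed

definition hits_windows :: "nat \<Rightarrow> 'a set \<Rightarrow> 'a list \<Rightarrow> bool" where
  "hits_windows m S xs \<longleftrightarrow> (\<forall>s. s + m \<le> length xs \<longrightarrow> (\<exists>t\<in>{s..<s + m}. xs ! t \<in> S))"

lemma hits_windows_gap:
  assumes "hits_windows m S xs" and "hi \<le> length xs" and "\<And>t. lo \<le> t \<Longrightarrow> t < hi \<Longrightarrow> xs ! t \<notin> S"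
  shows "hi < lo + m"
proof (rule ccontr)
  assume "\<not> hi < lo + m"
  then have "lo + m \<le> length xs"
    using assms(2) by simp
  then obtain t where "lo \<le> t" "t < lo + m" "xs ! t \<in> S"
    using assms(1) unfolding hits_windows_def by (meson atLeastLessThan_iff)
  with assms(3)[of t] \<open>\<not> hi < lo + m\<close> show False
    by simp
qed

lemma canonical_path_cases:
  obtains (few) "canonical_path V1 xs = xs"
    and "\<And>i j. i < length xs \<Longrightarrow> j < length xs \<Longrightarrow> xs ! i \<in> V1 \<Longrightarrow> xs ! j \<in> V1 \<Longrightarrow> i = j"
  | (shortcut) i j where "i < j" "j < length xs" "xs ! i \<in> V1" "xs ! j \<in> V1"
    "\<And>t. t < i \<Longrightarrow> xs ! t \<notin> V1" "\<And>t. j < t \<Longrightarrow> t < length xs \<Longrightarrow> xs ! t \<notin> V1"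
    "canonical_path V1 xs = take (Suc i) xs @ drop j xs"
proof -
  define I where "I = filter (\<lambda>i. xs ! i \<in> V1) [0..<length xs]"
  have set_I: "set I = {t. t < length xs \<and> xs ! t \<in> V1}"
    unfolding I_def by auto
  have sorted_I: "sorted_wrt (<) I"
    unfolding I_def by (intro sorted_wrt_filter) simp
  show thesis
  proof (cases "length I \<le> 1")
    case True
    then have "canonical_path V1 xs = xs"
      unfolding canonical_path_def I_def by (simp add: Let_def)
    moreover have "i = j" if "i \<in> set I" "j \<in> set I" for i j
      using True that by (cases I) auto
    ultimately show thesis
      using few set_I by blast
  next
    case False
    then obtain i r' where "I = i # r'" and "r' \<noteq> []"
      by (cases I) auto
    then obtain r j where I: "I = i # r @ [j]"
      by (metis rev_exhaust)
    have I_order: "\<forall>t\<in>set r. i < t \<and> t < j" "i < j"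
      using sorted_I unfolding I by (auto simp: sorted_wrt_append)
    have path: "canonical_path V1 xs = take (Suc i) xs @ drop j xs"
      using False unfolding canonical_path_def I_def[symmetric] by (simp add: I)
    have j: "j < length xs" "xs ! i \<in> V1" "xs ! j \<in> V1"
      using set_I unfolding I by auto
    have mem_I: "t = i \<or> t = j \<or> t \<in> set r" if "t < length xs" "xs ! t \<in> V1" for t
      using that set_I unfolding I by auto
    have before: "xs ! t \<notin> V1" if "t < i" for t
    proof
      assume "xs ! t \<in> V1"
      moreover have "t < length xs"
        using that I_order(2) j(1) by linarith
      ultimately show False
        using mem_I that I_order by fastforce
    qed
    have after: "xs ! t \<notin> V1" if "j < t" "t < length xs" for t
      using that I_order mem_I[OF that(2)] by fastforce
    show thesis
      by (rule shortcut[OF I_order(2) j before after path])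
  qed
qed

lemma sum_path_edges_avoiding_E1_of:
  fixes X :: "'a set \<Rightarrow> real"
  assumes "set (path_edges ys) \<subseteq> E" and "\<And>t. t < length ys - 1 \<Longrightarrow> ys ! t \<notin> V1 \<or> ys ! Suc t \<notin> V1"
    and "\<And>e. e \<in> E - E1_of V1 \<Longrightarrow> 0 \<le> X e \<and> X e \<le> a"
  shows "0 \<le> sum_list (map X (path_edges ys)) \<and> sum_list (map X (path_edges ys)) \<le> real (length ys - 1) * a"
proof -
  have "set (path_edges ys) \<subseteq> E - E1_of V1"
    using assms(1) path_edges_disjoint_E1_of[OF assms(2)] by blast
  then show ?thesis
    using sum_list_map_bounded[of "path_edges ys" X a] assms(3) by auto
qed

lemma length_le_of_hits_windows:
  assumes windows: "hits_windows m S xs"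
    and unique: "\<And>i j. i < length xs \<Longrightarrow> j < length xs \<Longrightarrow> xs ! i \<in> S \<Longrightarrow> xs ! j \<in> S \<Longrightarrow> i = j"
  shows "length xs \<le> 2 * m"
proof (cases "\<exists>i<length xs. xs ! i \<in> S")
  case True
  then obtain i where i: "i < length xs" "xs ! i \<in> S"
    by blast
  have other: "xs ! t \<notin> S" if "t < length xs" "t \<noteq> i" for t
    using unique[of t i] that i by auto
  have "i < 0 + m"
    using other i by (intro hits_windows_gap[OF windows]) auto
  moreover have "length xs < Suc i + m"
    using other by (intro hits_windows_gap[OF windows]) auto
  ultimately show ?thesis
    by linarith
next
  case False
  then have "length xs < 0 + m"
    by (intro hits_windows_gap[OF windows]) auto
  then show ?thesis
    by linarith
qed

lemma path_edges_shortcut: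
  assumes "i < j" and "j < length xs"
  shows "path_edges (take (Suc i) xs @ drop j xs)
    = path_edges (take (Suc i) xs) @ {xs ! i, xs ! j} # path_edges (drop j xs)"
proof -
  have "last (take (Suc i) xs) = xs ! i" "hd (drop j xs) = xs ! j"
    using assms by (simp_all add: take_Suc_conv_app_nth hd_drop_conv_nth)
  moreover have "xs \<noteq> []"
    using assms(2) by auto
  ultimately show ?thesis
    using assms(2) path_edges_append[of "take (Suc i) xs" "drop j xs"] by simp
qed

lemma abs_sum_canonical_path_le:
  fixes X :: "'a set \<Rightarrow> real"
  assumes "distinct xs" and edges: "set (path_edges xs) \<subseteq> E" and windows: "hits_windows m V1 xs"
    and cheap: "\<And>e. e \<in> E - E1_of V1 \<Longrightarrow> 0 \<le> X e \<and> X e \<le> a"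
    and costly: "\<And>e. e \<in> E1_of V1 \<Longrightarrow> 0 \<le> X e \<and> X e \<le> b"
    and "0 \<le> a" "0 \<le> b"
  shows "\<bar>sum_list (map X (path_edges (canonical_path V1 xs)))\<bar> \<le> 2 * real m * a + b"
proof (cases xs V1 rule: canonical_path_cases)
  case few
  have "0 \<le> sum_list (map X (path_edges xs)) \<and> sum_list (map X (path_edges xs)) \<le> real (length xs - 1) * a"
  proof (rule sum_path_edges_avoiding_E1_of[OF edges _ cheap])
    fix t assume "t < length xs - 1"
    then show "xs ! t \<notin> V1 \<or> xs ! Suc t \<notin> V1"
      using few(2)[of t "Suc t"] by fastforce
  qed
  moreover have "real (length xs - 1) * a \<le> 2 * real m * a"
    using length_le_of_hits_windows[OF windows few(2)] \<open>0 \<le> a\<close> by (intro mult_right_mono) auto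
  ultimately show ?thesis
    using few(1) \<open>0 \<le> b\<close> by (simp add: abs_le_iff)
next
  case (shortcut i j)
  let ?pre = "take (Suc i) xs" and ?suf = "drop j xs"
  have "i < 0 + m"
    using shortcut by (intro hits_windows_gap[OF windows]) auto
  moreover have "length xs < Suc j + m"
    using shortcut by (intro hits_windows_gap[OF windows]) auto
  moreover have "0 \<le> sum_list (map X (path_edges ?pre)) \<and> sum_list (map X (path_edges ?pre)) \<le> real i * a"
    using sum_path_edges_avoiding_E1_of[of ?pre E V1 X a] edges shortcut cheap
    by (simp add: path_edges_take) (meson order_trans set_take_subset)
  moreover have "0 \<le> sum_list (map X (path_edges ?suf)) \<and> sum_list (map X (path_edges ?suf)) \<le> real (length xs - Suc j) * a"
    using sum_path_edges_avoiding_E1_of[of ?suf E V1 X a] edges shortcut cheap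
    by (simp add: path_edges_drop) (meson order_trans set_drop_subset)
  moreover have "0 \<le> X {xs ! i, xs ! j} \<and> X {xs ! i, xs ! j} \<le> b"
    using shortcut \<open>distinct xs\<close> by (intro costly doubleton_mem_E1_of) (auto simp: nth_eq_iff_index_eq)
  moreover have "real i * a \<le> real m * a" "real (length xs - Suc j) * a \<le> real m * a"
    using calculation(1,2) \<open>0 \<le> a\<close> by (auto intro!: mult_right_mono)
  ultimately show ?thesis
    using shortcut(7) path_edges_shortcut[OF shortcut(1,2)] by (simp add: abs_le_iff)
qed

section \<open>Random vertex sets hitting every window\<close>

lemma binomial_diff_le:
  assumes "k \<le> n" and "0 < n"
  shows "real ((n - m) choose k) \<le> (1 - real k / real n) ^ m * real (n choose k)"
proof (induction m)
  case (Suc m)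
  have q: "0 \<le> 1 - real k / real n"
    using assms by simp
  show ?case
  proof (cases "0 < k \<and> k < n - m")
    case True
    define a where "a = n - m"
    have a: "0 < a" "k < a"
      using True unfolding a_def by auto
    have "real (a - k) * real (a choose k) = real a * real ((a - 1) choose k)"
      by (metis binomial_absorb_comp of_nat_mult)
    then have "real ((a - 1) choose k) = (1 - real k / real a) * real (a choose k)"
      using a by (simp add: field_simps of_nat_diff)
    also have "\<dots> \<le> (1 - real k / real n) * real (a choose k)"
      using a unfolding a_def by (intro mult_right_mono) (auto simp: frac_le)
    also have "\<dots> \<le> (1 - real k / real n) * ((1 - real k / real n) ^ m * real (n choose k))"
      using Suc.IH q unfolding a_def by (intro mult_left_mono) auto
    moreover have "a - 1 = n - Suc m"
      unfolding a_def by simp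
    ultimately show ?thesis
      by simp
  next
    case False
    then consider "k = 0" | "n - Suc m < k"
      by linarith
    then show ?thesis
      using q by cases (simp_all add: binomial_eq_0)
  qed
qed simp

lemma card_subsets_missing_window:
  fixes V :: "'a set" and P :: "'a \<Rightarrow> 'a \<Rightarrow> 'a list"
  assumes "finite V" and paths: "\<And>u v. u \<in> V \<Longrightarrow> v \<in> V \<Longrightarrow> distinct (P u v) \<and> set (P u v) \<subseteq> V"
    and "1 \<le> m"
  shows "card {S. S \<subseteq> V \<and> card S = k \<and> (\<exists>u\<in>V. \<exists>v\<in>V. \<not> hits_windows m S (P u v))}
    \<le> card V ^ 3 * ((card V - m) choose k)"
proof -
  define n where "n = card V"
  define window :: "'a \<Rightarrow> 'a \<Rightarrow> nat \<Rightarrow> 'a set" where "window u v s = (!) (P u v) ` {s..<s + m}" for u v s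
  define J where "J = {(u, v, s). u \<in> V \<and> v \<in> V \<and> s + m \<le> length (P u v)}"
  define T where "T = (\<lambda>(u, v, s). {S. S \<subseteq> V - window u v s \<and> card S = k})"
  have "J \<subseteq> V \<times> V \<times> {..<n}"
  proof -
    have "length (P u v) \<le> n" if "u \<in> V" "v \<in> V" for u v
      using paths[OF that] \<open>finite V\<close> unfolding n_def by (metis card_mono distinct_card)
    then show ?thesis
      unfolding J_def using \<open>1 \<le> m\<close> by fastforce
  qed
  then have "finite J"
    using \<open>finite V\<close> by (meson finite_SigmaI finite_lessThan finite_subset)
  have card_T: "card (T x) = (n - m) choose k" if "x \<in> J" for x
  proof -
    obtain u v s where x: "x = (u, v, s)" "u \<in> V" "v \<in> V" "s + m \<le> length (P u v)"
      using \<open>x \<in> J\<close> unfolding J_def by auto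
    have "card (window u v s) = m"
      unfolding window_def using paths[OF x(2,3)] x(4) by (subst card_image) (auto intro!: inj_on_nth)
    moreover have "window u v s \<subseteq> V"
      unfolding window_def using paths[OF x(2,3)] x(4) by (auto intro!: nth_mem)
    ultimately show ?thesis
      unfolding T_def x(1) n_def using \<open>finite V\<close> by (simp add: n_subsets card_Diff_subset finite_subset)
  qed
  have "{S. S \<subseteq> V \<and> card S = k \<and> (\<exists>u\<in>V. \<exists>v\<in>V. \<not> hits_windows m S (P u v))} \<subseteq> (\<Union>x\<in>J. T x)"
    unfolding hits_windows_def T_def window_def J_def by fastforce
  moreover have "finite (\<Union>x\<in>J. T x)"
    using \<open>finite J\<close> \<open>finite V\<close> unfolding T_def by (auto intro: finite_subset[of _ "Pow V"])
  ultimately have "card {S. S \<subseteq> V \<and> card S = k \<and> (\<exists>u\<in>V. \<exists>v\<in>V. \<not> hits_windows m S (P u v))} \<le> card (\<Union>x\<in>J. T x)"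
    by (rule card_mono[rotated])
  also have "\<dots> \<le> (\<Sum>x\<in>J. card (T x))"
    using \<open>finite J\<close> by (rule card_UN_le)
  also have "\<dots> = card J * ((n - m) choose k)"
    using card_T by simp
  also have "card J \<le> n ^ 3"
    using card_mono[OF _ \<open>J \<subseteq> V \<times> V \<times> {..<n}\<close>] \<open>finite V\<close> unfolding n_def
    by (simp add: card_cartesian_product power3_eq_cube)
  finally show ?thesis
    unfolding n_def by (simp add: mult_right_mono)
qed

lemma average_ge_of_few_bad:
  fixes f :: "'a \<Rightarrow> real"
  assumes "finite \<Omega>" and "\<Omega> \<noteq> {}" and "\<And>x. x \<in> \<Omega> \<Longrightarrow> 0 \<le> f x"
    and "\<And>x. x \<in> \<Omega> - B \<Longrightarrow> 1 - p \<le> f x" and "real (card (\<Omega> \<inter> B)) \<le> q * real (card \<Omega>)"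
    and "0 \<le> p" and "0 \<le> q"
  shows "1 - p - q \<le> sum f \<Omega> / real (card \<Omega>)"
proof (cases "p \<le> 1")
  case True
  have "real (card \<Omega>) = real (card (\<Omega> \<inter> B)) + real (card (\<Omega> - B))"
    using card_Int_Diff[OF \<open>finite \<Omega>\<close>] by (metis of_nat_add)
  then have "(1 - q) * real (card \<Omega>) \<le> real (card (\<Omega> - B))"
    using assms(5) by (simp add: algebra_simps)
  have "1 - p - q \<le> (1 - p) * (1 - q)"
    using assms(6,7) by (simp add: algebra_simps)
  then have "(1 - p - q) * real (card \<Omega>) \<le> (1 - p) * ((1 - q) * real (card \<Omega>))"
    by (metis mult.assoc mult_right_mono of_nat_0_le_iff)
  also have "\<dots> \<le> (1 - p) * real (card (\<Omega> - B))"
    using True \<open>(1 - q) * real (card \<Omega>) \<le> real (card (\<Omega> - B))\<close> by (intro mult_left_mono) auto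
  also have "\<dots> \<le> sum f (\<Omega> - B)"
    using assms(4) sum_bounded_below[of "\<Omega> - B" "1 - p" f] by (simp add: mult.commute)
  also have "\<dots> \<le> sum f \<Omega>"
    using assms(1,3) by (intro sum_mono2) auto
  finally have "(1 - p - q) * real (card \<Omega>) \<le> sum f \<Omega>" .
  moreover have "0 < real (card \<Omega>)"
    using assms(1,2) by (simp add: card_gt_0_iff)
  ultimately show ?thesis
    by (simp add: le_divide_eq)
next
  case False
  have "0 \<le> sum f \<Omega> / real (card \<Omega>)"
    using assms(3) by (simp add: sum_nonneg)
  then show ?thesis
    using False assms(7) by linarith
qed

lemma binomial_diff_le_exp:
  assumes "k \<le> n" and "0 < n"
  shows "real ((n - m) choose k) \<le> exp (- (real m * real k / real n)) * real (n choose k)"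
proof -
  have "real ((n - m) choose k) \<le> (1 - real k / real n) ^ m * real (n choose k)"
    using assms by (rule binomial_diff_le)
  also have "(1 - real k / real n) ^ m \<le> exp (- (real k / real n)) ^ m"
    using assms exp_ge_add_one_self[of "- (real k / real n)"] by (intro power_mono) auto
  also have "\<dots> = exp (- (real m * real k / real n))"
    by (simp flip: exp_of_nat_mult)
  finally show ?thesis
    by (simp add: mult_right_mono)
qed

lemma exists_window_length:
  assumes "n = k ^ 2" and "1 \<le> k" and "0 < \<gamma>" and "\<gamma> < 1"
  obtains m where "1 \<le> m" and "real m \<le> 3 * real k * ln (real n / \<gamma>) + 1"
    and "real n ^ 3 * real ((n - m) choose k) \<le> \<gamma> * real (n choose k)"
proof -
  define L where "L = ln (real n ^ 3 / \<gamma>)"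
  define m where "m = nat \<lceil>real k * L\<rceil>"
  have n: "1 \<le> real n" "real n = real k ^ 2" "k \<le> n"
    using assms(1,2) by (simp_all add: one_le_power) (simp add: power2_eq_square)
  have L: "L = 3 * ln (real n) - ln \<gamma>" "L \<le> 3 * ln (real n / \<gamma>)"
    unfolding L_def using n(1) assms(3,4) by (simp_all add: ln_div ln_realpow)
  moreover have "ln \<gamma> < 0" "0 \<le> ln (real n)"
    using n(1) assms(3,4) by simp_all
  ultimately have "0 < real k * L"
    using assms(2) by simp
  then have m: "real k * L \<le> real m" "real m \<le> real k * L + 1"
    unfolding m_def by (simp_all add: of_nat_nat)
  have "1 \<le> m"
    using m(1) \<open>0 < real k * L\<close> by simp
  moreover have "real m \<le> 3 * real k * ln (real n / \<gamma>) + 1"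
    using m(2) mult_left_mono[OF L(2), of "real k"] by simp
  moreover have "real n ^ 3 * real ((n - m) choose k) \<le> \<gamma> * real (n choose k)"
  proof -
    have "real ((n - m) choose k) \<le> exp (- (real m * real k / real n)) * real (n choose k)"
      using n(1,3) by (intro binomial_diff_le_exp) auto
    also have "exp (- (real m * real k / real n)) \<le> exp (- L)"
      using m(1) assms(2) n(2) by (simp add: power2_eq_square field_simps)
    also have "\<dots> = \<gamma> / real n ^ 3"
      unfolding L_def using n(1) assms(3) by (simp add: exp_minus)
    finally have "real ((n - m) choose k) \<le> \<gamma> / real n ^ 3 * real (n choose k)"
      by (simp add: mult_right_mono)
    then show ?thesis
      using n(1) by (simp add: field_simps)
  qed
  ultimately show thesis
    by (rule that)
qed

section \<open>The noise of Algorithm A\<close>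

definition noise_loc :: "nat \<Rightarrow> real \<Rightarrow> real \<Rightarrow> real \<Rightarrow> 'a set \<Rightarrow> 'a set \<Rightarrow> real" where
  "noise_loc n \<epsilon> \<delta> \<gamma> V1 e = (if e \<in> E1_of V1 then mu1 n \<epsilon> \<delta> \<gamma> else mu0 n \<epsilon> \<gamma>)"

definition noise_scale :: "nat \<Rightarrow> real \<Rightarrow> real \<Rightarrow> 'a set \<Rightarrow> 'a set \<Rightarrow> real" where
  "noise_scale n \<epsilon> \<delta> V1 e = (if e \<in> E1_of V1 then sigma1 n \<epsilon> \<delta> else sigma0 \<epsilon>)"

lemma noise_measure_eq_PiM:
  "noise_measure V E \<epsilon> \<delta> \<gamma> V1 =
    (\<Pi>\<^sub>M e\<in>E0_of E V1 \<union> E1_of V1. Lap (noise_loc (card V) \<epsilon> \<delta> \<gamma> V1 e) (noise_scale (card V) \<epsilon> \<delta> V1 e))"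
  unfolding noise_measure_def noise_loc_def noise_scale_def by (intro PiM_cong) auto

lemma sigma0_pos: "0 < \<epsilon> \<Longrightarrow> 0 < sigma0 \<epsilon>"
  by (simp add: sigma0_def)

lemma sigma1_pos: "0 < n \<Longrightarrow> 0 < \<epsilon> \<Longrightarrow> 0 < \<delta> \<Longrightarrow> \<delta> < 1 \<Longrightarrow> 0 < sigma1 n \<epsilon> \<delta>"
  by (simp add: sigma1_def)

lemma noise_scale_pos:
  assumes "0 < n" and "0 < \<epsilon>" and "0 < \<delta>" and "\<delta> < 1"
  shows "0 < noise_scale n \<epsilon> \<delta> V1 e"
  using assms by (simp add: noise_scale_def sigma0_pos sigma1_pos)

lemma mu0_nonneg:
  assumes "0 < n" and "0 < \<epsilon>" and "0 < \<gamma>" and "\<gamma> \<le> 1"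
  shows "0 \<le> mu0 n \<epsilon> \<gamma>"
proof -
  have "1 \<le> real n ^ 2"
    using assms(1) by (simp add: one_le_power)
  then have "1 \<le> real n ^ 2 / \<gamma>"
    using assms(3,4) by (simp add: le_divide_eq)
  then show ?thesis
    using assms by (simp add: mu0_def sigma0_def)
qed

lemma mu1_nonneg:
  assumes "0 < n" and "0 < \<epsilon>" and "0 < \<delta>" and "\<delta> < 1" and "0 < \<gamma>" and "\<gamma> \<le> 1"
  shows "0 \<le> mu1 n \<epsilon> \<delta> \<gamma>"
proof -
  have "1 \<le> real n / \<gamma>"
    using assms(1,5,6) by (simp add: le_divide_eq)
  then show ?thesis
    using assms sigma1_pos[OF assms(1-4)] by (simp add: mu1_def)
qed

lemma noise_loc_nonneg:
  assumes "0 < n" and "0 < \<epsilon>" and "0 < \<delta>" and "\<delta> < 1" and "0 < \<gamma>" and "\<gamma> \<le> 1"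
  shows "0 \<le> noise_loc n \<epsilon> \<delta> \<gamma> V1 e"
  using mu0_nonneg[of n \<epsilon> \<gamma>] mu1_nonneg[of n \<epsilon> \<delta> \<gamma>] assms by (simp add: noise_loc_def)

lemma exp_neg_noise_loc_div_scale:
  assumes "0 < n" and "0 < \<epsilon>" and "0 < \<delta>" and "\<delta> < 1" and "0 < \<gamma>"
  shows "exp (- (noise_loc n \<epsilon> \<delta> \<gamma> V1 e / noise_scale n \<epsilon> \<delta> V1 e))
    = (if e \<in> E1_of V1 then \<gamma> / real n else \<gamma> / real n ^ 2)"
proof -
  have "sigma1 n \<epsilon> \<delta> \<noteq> 0" "sigma0 \<epsilon> \<noteq> 0"
    using sigma0_pos sigma1_pos assms by (metis less_irrefl)+
  then show ?thesis
    using assms by (simp add: noise_loc_def noise_scale_def mu1_def mu0_def exp_minus)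
qed

lemma simple_graph_finite_edges:
  assumes "simple_graph V E"
  shows "finite E" and "card E \<le> card V ^ 2"
proof -
  have "finite V"
    using assms unfolding simple_graph_def by simp
  have "E \<subseteq> (\<lambda>(u, v). {u, v}) ` (V \<times> V)"
  proof
    fix e assume "e \<in> E"
    then obtain u v where "e = {u, v}" "u \<in> V" "v \<in> V"
      using assms unfolding simple_graph_def by (metis card_2_iff insert_subset)
    then show "e \<in> (\<lambda>(u, v). {u, v}) ` (V \<times> V)"
      by auto
  qed
  moreover have "finite ((\<lambda>(u, v). {u, v}) ` (V \<times> V))"
    using \<open>finite V\<close> by simp
  ultimately show "finite E"
    by (rule finite_subset)
  have "card E \<le> card ((\<lambda>(u, v). {u, v}) ` (V \<times> V))"
    by (rule card_mono) fact+
  also have "\<dots> \<le> card V ^ 2"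
    using card_image_le[of "V \<times> V"] \<open>finite V\<close> by (simp add: card_cartesian_product power2_eq_square)
  finally show "card E \<le> card V ^ 2" .
qed

lemma sum_noise_tails_le:
  assumes "simple_graph V E" and "V1 \<subseteq> V" and "card V1 ^ 2 \<le> card V" and "0 < card V"
    and "0 < \<epsilon>" and "0 < \<delta>" and "\<delta> < 1" and "0 < \<gamma>"
  shows "(\<Sum>e\<in>E0_of E V1 \<union> E1_of V1.
      exp (- noise_loc (card V) \<epsilon> \<delta> \<gamma> V1 e / noise_scale (card V) \<epsilon> \<delta> V1 e)) \<le> 2 * \<gamma>"
proof -
  define n where "n = card V"
  have "finite V1"
    using assms(1,2) unfolding simple_graph_def by (auto intro: finite_subset)
  have E1: "finite (E1_of V1)" "real (card (E1_of V1)) \<le> real n"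
    using finite_E1_of card_E1_of_le[OF \<open>finite V1\<close>] \<open>finite V1\<close> assms(3) unfolding n_def by simp_all
  have E0: "finite (E0_of E V1)" "real (card (E0_of E V1)) \<le> real n ^ 2"
    using simple_graph_finite_edges[OF assms(1)] card_mono[of E "E0_of E V1"]
    unfolding E0_of_def n_def by (auto simp flip: of_nat_power)
  have "(\<Sum>e\<in>E0_of E V1 \<union> E1_of V1. exp (- noise_loc n \<epsilon> \<delta> \<gamma> V1 e / noise_scale n \<epsilon> \<delta> V1 e))
      = (\<Sum>e\<in>E0_of E V1. \<gamma> / real n ^ 2) + (\<Sum>e\<in>E1_of V1. \<gamma> / real n)"
    using E0(1) E1(1) assms(4-8) unfolding n_def
    by (subst sum.union_disjoint) (auto simp: exp_neg_noise_loc_div_scale E0_of_def intro!: sum.cong)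
  also have "\<dots> = real (card (E0_of E V1)) * (\<gamma> / real n ^ 2) + real (card (E1_of V1)) * (\<gamma> / real n)"
    by simp
  also have "\<dots> \<le> real n ^ 2 * (\<gamma> / real n ^ 2) + real n * (\<gamma> / real n)"
    using E0(2) E1(2) assms(8) by (intro add_mono mult_right_mono) auto
  also have "\<dots> = 2 * \<gamma>"
    using assms(4) unfolding n_def by simp
  finally show ?thesis
    unfolding n_def .
qed

lemma borel_measurable_PiM_component:
  assumes "\<And>i. i \<in> I \<Longrightarrow> sets (M i) = sets borel"
  shows "(\<lambda>X. X i) \<in> borel_measurable (\<Pi>\<^sub>M i\<in>I. M i)"
proof (cases "i \<in> I")
  case True
  then show ?thesis
    using measurable_component_singleton[OF True, of M] measurable_cong_sets[OF refl assms[OF True]] by blast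
next
  case False
  then have "X i = undefined" if "X \<in> space (\<Pi>\<^sub>M i\<in>I. M i)" for X
    using that by (auto simp: space_PiM PiE_def extensional_def)
  then show ?thesis
    by (subst measurable_cong[where g = "\<lambda>_. undefined"]) auto
qed

lemma borel_measurable_sum_list_map:
  fixes M :: "('a \<Rightarrow> real) measure"
  assumes "\<And>e. (\<lambda>X. X e) \<in> borel_measurable M"
  shows "(\<lambda>X. sum_list (map X es)) \<in> borel_measurable M"
  by (induction es) (simp_all add: assms borel_measurable_add)

lemma w_out_minus_w_bar: "w_out V E w V1 X e - w_bar V E w V1 e = X e"
  unfolding w_out_def w_bar_def by simp

lemma abs_sum_canonical_path_noise_le:
  assumes "is_path V E xs u v" and "hits_windows m V1 xs"
    and in_range: "\<And>e. e \<in> E0_of E V1 \<union> E1_of V1 \<Longrightarrow> X e \<in> {0..2 * noise_loc n \<epsilon> \<delta> \<gamma> V1 e}"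
    and "0 \<le> mu0 n \<epsilon> \<gamma>" and "0 \<le> mu1 n \<epsilon> \<delta> \<gamma>"
  shows "\<bar>sum_list (map X (path_edges (canonical_path V1 xs)))\<bar>
    \<le> 2 * real m * (2 * mu0 n \<epsilon> \<gamma>) + 2 * mu1 n \<epsilon> \<delta> \<gamma>"
proof (rule abs_sum_canonical_path_le)
  show "distinct xs" "set (path_edges xs) \<subseteq> E"
    using assms(1) unfolding is_path_def by auto
  show "0 \<le> X e \<and> X e \<le> 2 * mu0 n \<epsilon> \<gamma>" if "e \<in> E - E1_of V1" for e
    using in_range[of e] that unfolding E0_of_def noise_loc_def by simp
  show "0 \<le> X e \<and> X e \<le> 2 * mu1 n \<epsilon> \<delta> \<gamma>" if "e \<in> E1_of V1" for e
    using in_range[of e] that unfolding noise_loc_def by simp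
qed (use assms in auto)

lemma prob_canonical_path_noise_le:
  fixes V :: "'a set" and P :: "'a \<Rightarrow> 'a \<Rightarrow> 'a list"
  assumes graph: "simple_graph V E" and "V1 \<subseteq> V" and "card V1 ^ 2 \<le> card V" and "0 < card V"
    and paths: "\<And>u v. u \<in> V \<Longrightarrow> v \<in> V \<Longrightarrow> is_path V E (P u v) u v \<and> hits_windows m V1 (P u v)"
    and "0 < \<epsilon>" and "0 < \<delta>" and "\<delta> < 1" and "0 < \<gamma>" and "\<gamma> \<le> 1"
    and budget: "2 * real m * (2 * mu0 (card V) \<epsilon> \<gamma>) + 2 * mu1 (card V) \<epsilon> \<delta> \<gamma> \<le> B"
  shows "1 - 2 * \<gamma> \<le> measure (noise_measure V E \<epsilon> \<delta> \<gamma> V1)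
    {X \<in> space (noise_measure V E \<epsilon> \<delta> \<gamma> V1). \<forall>u\<in>V. \<forall>v\<in>V.
       \<bar>\<Sum>e\<leftarrow>path_edges (canonical_path V1 (P u v)). w_out V E w V1 X e - w_bar V E w V1 e\<bar> \<le> B}"
proof -
  define n where "n = card V"
  define I where "I = E0_of E V1 \<union> E1_of V1"
  define loc where "loc = noise_loc n \<epsilon> \<delta> \<gamma> V1"
  define M where "M = noise_measure V E \<epsilon> \<delta> \<gamma> V1"
  have M: "M = (\<Pi>\<^sub>M e\<in>I. Lap (loc e) (noise_scale n \<epsilon> \<delta> V1 e))"
    unfolding M_def I_def loc_def n_def by (rule noise_measure_eq_PiM)
  interpret M: prob_space M
    unfolding M using noise_scale_pos assms(4,6-8) unfolding n_def by (intro prob_space_PiM prob_space_Lap)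
  have "finite V" "finite I"
    using simple_graph_finite_edges(1)[OF graph] finite_E1_of finite_subset[OF \<open>V1 \<subseteq> V\<close>] graph
    unfolding I_def E0_of_def simple_graph_def by blast+
  define in_range where "in_range = {X \<in> space M. \<forall>e\<in>I. X e \<in> {0..2 * loc e}}"
  define good where "good = {X \<in> space M. \<forall>u\<in>V. \<forall>v\<in>V.
    \<bar>\<Sum>e\<leftarrow>path_edges (canonical_path V1 (P u v)). w_out V E w V1 X e - w_bar V E w V1 e\<bar> \<le> B}"
  have "1 - 2 * \<gamma> \<le> 1 - (\<Sum>e\<in>I. exp (- loc e / noise_scale n \<epsilon> \<delta> V1 e))"
    using sum_noise_tails_le[OF graph assms(2-4,6-9)] unfolding I_def loc_def n_def by simp
  also have "\<dots> \<le> measure M in_range"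
    unfolding M in_range_def
    using \<open>finite I\<close> noise_scale_pos[OF assms(4,6-8)] noise_loc_nonneg[OF assms(4,6-10)]
    unfolding n_def loc_def by (intro prob_PiM_Lap_within)
  also have "\<dots> \<le> measure M good"
  proof (rule M.finite_measure_mono)
    have "0 \<le> mu0 n \<epsilon> \<gamma>" "0 \<le> mu1 n \<epsilon> \<delta> \<gamma>"
      using mu0_nonneg mu1_nonneg assms(4,6-10) unfolding n_def by simp_all
    then have "\<bar>sum_list (map X (path_edges (canonical_path V1 (P u v))))\<bar> \<le> B"
      if "X \<in> in_range" "u \<in> V" "v \<in> V" for X u v
      using abs_sum_canonical_path_noise_le[of V E "P u v" u v m V1 X n] paths[OF that(2,3)] that(1) budget
      unfolding in_range_def I_def loc_def n_def by fastforce
    then show "in_range \<subseteq> good"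
      unfolding in_range_def good_def w_out_minus_w_bar by blast
    have [measurable]: "(\<lambda>X. sum_list (map X es)) \<in> borel_measurable M" for es
      unfolding M by (intro borel_measurable_sum_list_map borel_measurable_PiM_component) simp
    show "good \<in> sets M"
      unfolding good_def w_out_minus_w_bar using \<open>finite V\<close> by measurable
  qed
  finally show ?thesis
    unfolding good_def M_def .
qed

lemma noise_budget_arith:
  fixes k s L L2 m :: real
  assumes k: "2 \<le> k" and s: "1 \<le> s" and L: "1 \<le> L" "0 \<le> L2" "L2 \<le> 2 * L"
    and m: "0 \<le> m" "m \<le> 3 * k * L + 1"
  shows "8 * (m * L2) + 8 * (sqrt 2 * k * s * L) \<le> 100 * k * s * L\<^sup>2"
proof -
  have "L \<le> L\<^sup>2"
    using mult_left_mono[OF L(1), of L] L(1) by (simp add: power2_eq_square)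
  have "m * L2 \<le> (3 * k * L + 1) * (2 * L)"
    using m L by (intro mult_mono) auto
  also have "\<dots> = 6 * k * L\<^sup>2 + 2 * L"
    by (simp add: power2_eq_square algebra_simps)
  also have "\<dots> \<le> 8 * k * L\<^sup>2"
    using \<open>L \<le> L\<^sup>2\<close> mult_right_mono[of 1 k "L\<^sup>2"] k by simp
  also have "\<dots> \<le> 8 * k * s * L\<^sup>2"
    using mult_left_mono[OF s, of "8 * k * L\<^sup>2"] k by (simp add: mult_ac)
  finally have A: "m * L2 \<le> 8 * k * s * L\<^sup>2" .
  have "sqrt 2 \<le> 3 / 2"
    by (rule real_le_lsqrt) (auto simp: power2_eq_square)
  then have "sqrt 2 * L \<le> 3 / 2 * L\<^sup>2"
    using \<open>L \<le> L\<^sup>2\<close> L(1) by (intro mult_mono) auto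
  from mult_left_mono[OF this, of "k * s"] have B: "sqrt 2 * k * s * L \<le> 3 / 2 * k * s * L\<^sup>2"
    using k s by (simp add: mult_ac)
  have "0 \<le> k * s * L\<^sup>2"
    using k s by simp
  then show ?thesis
    using A B by linarith
qed

lemma noise_budget_le:
  assumes "n = k ^ 2" and "2 \<le> k" and "0 < \<epsilon>" and "0 < \<delta>" and "\<delta> \<le> exp (- 1)" and "0 < \<gamma>" and "\<gamma> < 1"
    and m: "real m \<le> 3 * real k * ln (real n / \<gamma>) + 1"
  shows "2 * real m * (2 * mu0 n \<epsilon> \<gamma>) + 2 * mu1 n \<epsilon> \<delta> \<gamma>
    \<le> 100 * sqrt (real n) * sqrt (ln (1 / \<delta>)) * (ln (real n / \<gamma>))\<^sup>2 / \<epsilon>"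
proof -
  define L where "L = ln (real n / \<gamma>)"
  define L2 where "L2 = ln (real n ^ 2 / \<gamma>)"
  define s where "s = sqrt (ln (1 / \<delta>))"
  have k: "2 \<le> real k" "sqrt (real n) = real k"
    using assms(1,2) by simp_all
  have "4 \<le> real n"
    using assms(1,2) power_mono[of 2 "real k" 2] by simp
  then have "exp 1 \<le> real n"
    using exp_le by linarith
  then have logs: "ln \<gamma> < 0" "1 \<le> ln (real n)"
    using assms(6,7) \<open>4 \<le> real n\<close> by (simp_all add: ln_ge_iff)
  have "L = ln (real n) - ln \<gamma>" "L2 = 2 * ln (real n) - ln \<gamma>"
    using \<open>4 \<le> real n\<close> assms(6) unfolding L_def L2_def by (simp_all add: ln_div ln_realpow)
  then have L: "1 \<le> L" "0 \<le> L2" "L2 \<le> 2 * L"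
    using logs by linarith+
  have "exp 1 \<le> 1 / \<delta>"
    using assms(4,5) by (simp add: exp_minus field_simps)
  then have "1 \<le> s"
    unfolding s_def using assms(4) by (simp add: ln_ge_iff)
  have "2 * real m * (2 * mu0 n \<epsilon> \<gamma>) + 2 * mu1 n \<epsilon> \<delta> \<gamma>
      = (8 * (real m * L2) + 8 * (sqrt 2 * real k * s * L)) / \<epsilon>"
    using assms(3) k(2) unfolding mu0_def sigma0_def mu1_def sigma1_def L_def L2_def s_def
    by (simp add: field_simps)
  also have "\<dots> \<le> 100 * real k * s * L\<^sup>2 / \<epsilon>"
    using noise_budget_arith[OF k(1) \<open>1 \<le> s\<close> L _ m[folded L_def]] assms(3)
    by (intro divide_right_mono) auto
  finally show ?thesis
    unfolding L_def s_def k(2) .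
qed

lemma average_prob_canonical_path_noise_le:
  fixes V :: "'a set" and P :: "'a \<Rightarrow> 'a \<Rightarrow> 'a list"
  assumes graph: "simple_graph V E" and n: "card V = k ^ 2" and "2 \<le> k"
    and "0 < \<epsilon>" and "0 < \<delta>" and "\<delta> \<le> exp (- 1)" and "0 < \<gamma>" and "\<gamma> < 1"
    and paths: "\<And>u v. u \<in> V \<Longrightarrow> v \<in> V \<Longrightarrow> is_path V E (P u v) u v"
  shows "1 - 4 * \<gamma> \<le> (\<Sum>V1\<in>{S. S \<subseteq> V \<and> card S = isqrt (card V)}.
        measure (noise_measure V E \<epsilon> \<delta> \<gamma> V1)
          {X \<in> space (noise_measure V E \<epsilon> \<delta> \<gamma> V1). \<forall>u\<in>V. \<forall>v\<in>V.
             \<bar>\<Sum>e\<leftarrow>path_edges (canonical_path V1 (P u v)). w_out V E w V1 X e - w_bar V E w V1 e\<bar>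
             \<le> 100 * sqrt (real (card V)) * sqrt (ln (1 / \<delta>)) * (ln (real (card V) / \<gamma>))\<^sup>2 / \<epsilon>})
     / real (card {S. S \<subseteq> V \<and> card S = isqrt (card V)})"
proof -
  define B where "B = 100 * sqrt (real (card V)) * sqrt (ln (1 / \<delta>)) * (ln (real (card V) / \<gamma>))\<^sup>2 / \<epsilon>"
  define \<Omega> where "\<Omega> = {S. S \<subseteq> V \<and> card S = k}"
  define f where "f V1 = measure (noise_measure V E \<epsilon> \<delta> \<gamma> V1)
    {X \<in> space (noise_measure V E \<epsilon> \<delta> \<gamma> V1). \<forall>u\<in>V. \<forall>v\<in>V.
       \<bar>\<Sum>e\<leftarrow>path_edges (canonical_path V1 (P u v)). w_out V E w V1 X e - w_bar V E w V1 e\<bar> \<le> B}" for V1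
  obtain m where "1 \<le> m" and m: "real m \<le> 3 * real k * ln (real (card V) / \<gamma>) + 1"
    and binomial: "real (card V) ^ 3 * real ((card V - m) choose k) \<le> \<gamma> * real (card V choose k)"
    using exists_window_length[OF n] \<open>2 \<le> k\<close> assms(7,8) by auto
  define Bad where "Bad = {S. \<exists>u\<in>V. \<exists>v\<in>V. \<not> hits_windows m S (P u v)}"
  have "finite V"
    using graph unfolding simple_graph_def by simp
  have "isqrt (card V) = k"
    unfolding n isqrt_def by simp
  have "0 < card V" "k \<le> card V"
    using \<open>2 \<le> k\<close> unfolding n by (simp_all add: power2_eq_square)
  have "\<delta> < 1"
    using assms(6) by (smt (verit) exp_less_one_iff)
  have card_\<Omega>: "card \<Omega> = card V choose k"
    unfolding \<Omega>_def using \<open>finite V\<close> by (rule n_subsets)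
  then have "\<Omega> \<noteq> {}"
    using \<open>k \<le> card V\<close> by (metis card.empty binomial_eq_0_iff not_less)
  have "card (\<Omega> \<inter> Bad) \<le> card V ^ 3 * ((card V - m) choose k)"
    using card_subsets_missing_window[OF \<open>finite V\<close> _ \<open>1 \<le> m\<close>, of P k] paths
    unfolding \<Omega>_def Bad_def is_path_def by (simp add: Collect_conj_eq[symmetric] conj_ac)
  then have "real (card (\<Omega> \<inter> Bad)) \<le> \<gamma> * real (card \<Omega>)"
    using binomial card_\<Omega> by (smt (verit) of_nat_le_iff of_nat_mult of_nat_power)
  moreover have "1 - 2 * \<gamma> \<le> f V1" if "V1 \<in> \<Omega> - Bad" for V1
    unfolding f_def
  proof (rule prob_canonical_path_noise_le[OF graph])
    show "V1 \<subseteq> V" "card V1 ^ 2 \<le> card V"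
      using that n unfolding \<Omega>_def by auto
    show "is_path V E (P u v) u v \<and> hits_windows m V1 (P u v)" if "u \<in> V" "v \<in> V" for u v
      using paths \<open>V1 \<in> \<Omega> - Bad\<close> that unfolding Bad_def by auto
    show "2 * real m * (2 * mu0 (card V) \<epsilon> \<gamma>) + 2 * mu1 (card V) \<epsilon> \<delta> \<gamma> \<le> B"
      unfolding B_def using noise_budget_le[OF n \<open>2 \<le> k\<close> assms(4-8) m] .
  qed (use \<open>0 < card V\<close> \<open>\<delta> < 1\<close> assms(4,5,7,8) in auto)
  ultimately have "1 - 2 * \<gamma> - \<gamma> \<le> sum f \<Omega> / real (card \<Omega>)"
    using \<open>0 < \<gamma>\<close> \<open>finite V\<close> \<open>\<Omega> \<noteq> {}\<close>
    by (intro average_ge_of_few_bad) (auto simp: \<Omega>_def f_def intro: finite_subset[of _ "Pow V"])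
  then show ?thesis
    unfolding \<open>isqrt (card V) = k\<close> \<Omega>_def f_def B_def using \<open>0 < \<gamma>\<close> by linarith
qed

theorem mainTheorem3:
  "\<exists>C>0. \<forall>(V :: nat set) E w \<epsilon> \<delta> \<gamma> P.
     simple_graph V E \<and> connected_graph V E \<and> card V \<ge> 2 \<and>
     (\<exists>k. card V = k ^ 2) \<and> (\<forall>e\<in>E. w e \<ge> 0) \<and>
     0 < \<epsilon> \<and> \<epsilon> < 2 \<and> 0 < \<delta> \<and> \<delta> \<le> exp (-1) \<and> 0 < \<gamma> \<and> \<gamma> < 1 \<and>
     (\<forall>u\<in>V. \<forall>v\<in>V. is_shortest_path V E w (P u v) u v)
     \<longrightarrow>
     (\<Sum>V1\<in>{S. S \<subseteq> V \<and> card S = isqrt (card V)}.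
        measure (noise_measure V E \<epsilon> \<delta> \<gamma> V1)
          {X \<in> space (noise_measure V E \<epsilon> \<delta> \<gamma> V1).
             \<forall>u\<in>V. \<forall>v\<in>V.
               \<bar>\<Sum>e\<leftarrow>path_edges (canonical_path V1 (P u v)).
                   w_out V E w V1 X e - w_bar V E w V1 e\<bar>
               \<le> C * sqrt (real (card V)) * sqrt (ln (1 / \<delta>)) * (ln (real (card V) / \<gamma>))\<^sup>2 / \<epsilon>})
     / real (card {S. S \<subseteq> V \<and> card S = isqrt (card V)})
     \<ge> 1 - 4 * \<gamma>"
proof (intro exI[of _ 100] conjI allI impI, goal_cases)
  case (2 V E w \<epsilon> \<delta> \<gamma> P)
  then obtain k where k: "card V = k ^ 2"
    by blast
  have "2 \<le> k"
  proof (rule ccontr)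
    assume "\<not> 2 \<le> k"
    then have "k = 0 \<or> k = 1"
      by linarith
    then have "k ^ 2 \<le> 1"
      by auto
    with k 2 show False
      by simp
  qed
  with 2 show ?case
    by (intro average_prob_canonical_path_noise_le[OF _ k]) (auto simp: is_shortest_path_def)
qed simp

end
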